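(* Let $S$ be a Stone relation algebra and let $C : S\to\mathbb{N}\cup\{\infty\}$ map each $x$ to the number of atoms below $x$. Then: 1. If $S$ is atomic, atom-rectangular and simple, then for all $x\in S$: $x$ is an atom $\iff C(x)=1$. 2. If $S$ is an atomic relation algebra, then for all $x\in S$: $x$ is an atom $\iff C(x)=1$. 3. If $S$ is atom-rectangular, then $C(\top)\le C(1)^2$. 4. If $S$ is atomic and simple with finitely many atoms, then $C(\top)\ge C(1)^2$. 5. If $S$ is atom-rectangular and atom-simple, then $C(\top)=C(1)^2$. 6. If $S$ has finitely many atoms, then $C(\top)\neq\infty$.
   Context: A Stone relation algebra is a structure $(S,\sqcup,\sqcap,\cdot,\overline{\,\cdot\,},{}^{\smile},\bot,\top,1)$ (write $xy$ for $x\cdot y$, $\overline{x}$ for the pseudocomplement, $x^{\smile}$ for the converse) such that: $(S,\sqcup,\sqcap,\bot,\top)$ is a bounded distributive lattice with order $x\sqsubseteq y\iff x\sqcup y=y$; $x\sqcap y=\bot\iff x\sqsubseteq\overline{y}$; $\overline{x}\sqcup\overline{\overline{x}}=\top$; $\cdot$ is associative with two-sided unit $1$, distributes over $\sqcup$ on both sides, and $\bot$ is a zero of $\cdot$; $x^{\smile\smile}=x$, $(xy)^{\smile}=y^{\smile}x^{\smile}$, $(x\sqcup y)^{\smile}=x^{\smile}\sqcup y^{\smile}$; $\overline{\overline{1}}=1$; $\overline{\overline{xy}}=\overline{\overline{x}}\,\overline{\overline{y}}$; $xy\sqcap z\sqsubseteq x(y\sqcap x^{\smile}z)$. A relation algebra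 is a Stone relation algebra with $\overline{\overline{x}}=x$ for all $x$. An atom is an element $x\neq\bot$ such that $\bot\neq y\sqsubseteq x$ implies $y=x$. An element $x$ is a rectangle if $x\top x\sqsubseteq x$, and simple if $\top x\top=\top$. $S$ is simple if every element other than $\bot$ is simple; atomic if every $x\neq\bot$ has an atom below it; atom-rectangular if every atom is a rectangle; atom-simple if every atom is simple. Here $\infty^2=\infty$ and $n\le\infty$. *)

theory Defs
  imports Main "HOL-Library.Extended_Nat"
begin

class stone_relation_algebra = bounded_lattice + distrib_lattice + monoid_mult + uminus +
  fixes conv :: "'a \<Rightarrow> 'a"
  assumes pseudo_complement: "inf x y = bot \<longleftrightarrow> x \<le> - y"
  and stone: "sup (- x) (- (- x)) = top"
  and mult_sup_distl: "x * sup y z = sup (x * y) (x * z)"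
  and mult_sup_distr: "sup x y * z = sup (x * z) (y * z)"
  and mult_bot_left: "bot * x = bot"
  and mult_bot_right: "x * bot = bot"
  and conv_involutive: "conv (conv x) = x"
  and conv_mult: "conv (x * y) = conv y * conv x"
  and conv_sup: "conv (sup x y) = sup (conv x) (conv y)"
  and pp_one: "- (- 1) = (1::'a)"
  and pp_mult: "- (- (x * y)) = (- (- x)) * (- (- y))"
  and dedekind_1: "inf (x * y) z \<le> x * inf y (conv x * z)"

context stone_relation_algebra
begin

definition atom :: "'a \<Rightarrow> bool" where
  "atom x \<longleftrightarrow> x \<noteq> bot \<and> (\<forall>y. y \<noteq> bot \<and> y \<le> x \<longrightarrow> y = x)"

definition rectangle :: "'a \<Rightarrow> bool" where
  "rectangle x \<longleftrightarrow> x * top * x \<le> x"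

definition simple :: "'a \<Rightarrow> bool" where
  "simple x \<longleftrightarrow> top * x * top = top"

definition atom_count :: "'a \<Rightarrow> enat" where
  "atom_count x = (if finite {a. atom a \<and> a \<le> x} then enat (card {a. atom a \<and> a \<le> x}) else \<infinity>)"

end

definition atomic_alg :: "'a::stone_relation_algebra itself \<Rightarrow> bool" where
  "atomic_alg _ \<longleftrightarrow> (\<forall>x::'a. x \<noteq> bot \<longrightarrow> (\<exists>a. atom a \<and> a \<le> x))"

definition atom_rectangular :: "'a::stone_relation_algebra itself \<Rightarrow> bool" where
  "atom_rectangular _ \<longleftrightarrow> (\<forall>a::'a. atom a \<longrightarrow> rectangle a)"

definition atom_simple :: "'a::stone_relation_algebra itself \<Rightarrow> bool" where
  "atom_simple _ \<longleftrightarrow> (\<forall>a::'a. atom a \<longrightarrow> simple a)"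

definition simple_alg :: "'a::stone_relation_algebra itself \<Rightarrow> bool" where
  "simple_alg _ \<longleftrightarrow> (\<forall>x::'a. x \<noteq> bot \<longrightarrow> simple x)"

definition relation_algebra :: "'a::stone_relation_algebra itself \<Rightarrow> bool" where
  "relation_algebra _ \<longleftrightarrow> (\<forall>x::'a. - (- x) = x)"

definition finitely_many_atoms :: "'a::stone_relation_algebra itself \<Rightarrow> bool" where
  "finitely_many_atoms _ \<longleftrightarrow> finite {a::'a. atom a}"

end

theory Submission
  imports Defs
begin

(* Every atom a has an atomic coreflexive domain 1 \<sqinter> a\<top> and codomain 1 \<sqinter> \<top>a, and a
   rectangle a is determined by them, since a = a\<top> \<sqinter> \<top>a = (domain a) \<top> (codomain a). So if
   all atoms are rectangles, a \<mapsto> (domain a, codomain a) injects the atoms into pairs of atoms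
   below 1. Conversely, for simple atoms p, q \<le> 1 the element p\<top>q is non-zero and every atom
   below it has domain p and codomain q; if p and q are also rectangles, p\<top>q is itself an atom.
   If a is the only atom below x in an atomic algebra, then x \<sqinter> -a = \<bottom>, i.e. x \<le> --a, so x
   is an atom as soon as atoms are regular. This holds trivially in relation algebras, and for
   rectangular simple atoms because -- distributes over p\<top>q and a coreflexive rectangular
   simple p is regular: --p \<le> --p \<top> p \<top> --p \<le> p. *)

definition ecard :: "'a set \<Rightarrow> enat" where
  "ecard A = (if finite A then enat (card A) else \<infinity>)"

lemma ecard_le_if_inj_on:
  assumes "inj_on f A" and "f ` A \<subseteq> B"
  shows "ecard A \<le> ecard B"
proof (cases "finite B")
  case True
  then have "finite A"
    using assms finite_imageD finite_subset by blast
  moreover have "card A \<le> card B"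
    using assms True card_inj_on_le by blast
  ultimately show ?thesis
    using True by (simp add: ecard_def)
qed (simp add: ecard_def)

lemma ecard_le_if_subset_image:
  assumes "B \<subseteq> f ` A"
  shows "ecard B \<le> ecard A"
proof (cases "finite A")
  case True
  then have "finite B"
    using assms finite_surj by blast
  moreover have "card B \<le> card A"
    using assms True surj_card_le by blast
  ultimately show ?thesis
    using True by (simp add: ecard_def)
qed (simp add: ecard_def)

lemma ecard_Times: "ecard (A \<times> B) = ecard A * ecard B"
  by (cases "A = {} \<or> B = {}")
    (auto simp: ecard_def card_cartesian_product finite_cartesian_product_iff
      card_gt_0_iff imult_infinity imult_infinity_right zero_enat_def)

lemma ecard_eq_1_iff: "ecard A = 1 \<longleftrightarrow> (\<exists>a. A = {a})"
  by (auto simp: ecard_def one_enat_def card_1_singleton_iff)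

context stone_relation_algebra
begin

lemma atom_count_eq_ecard: "atom_count x = ecard {a. atom a \<and> a \<le> x}"
  by (simp add: atom_count_def ecard_def)

lemma mult_left_isotone: "x \<le> y \<Longrightarrow> x * z \<le> y * z"
  by (metis le_iff_sup mult_sup_distr)

lemma mult_right_isotone: "x \<le> y \<Longrightarrow> z * x \<le> z * y"
  by (metis le_iff_sup mult_sup_distl)

lemma mult_isotone: "x \<le> y \<Longrightarrow> z \<le> w \<Longrightarrow> x * z \<le> y * w"
  by (meson mult_left_isotone mult_right_isotone order_trans)

lemma top_mult_top: "top * top = top"
  by (metis mult_right_isotone mult_1_right top.extremum top.extremum_uniqueI)

lemma mult_top_increasing: "x \<le> x * top"
  by (metis mult_right_isotone mult_1_right top_greatest)

lemma top_mult_increasing: "x \<le> top * x"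
  by (metis mult_left_isotone mult_1_left top_greatest)

lemma mult_top_mult_le_mult_top: "x * top * y \<le> x * top"
  using mult_right_isotone[OF top_greatest[of "top * y"], of x]
  by (simp add: mult.assoc top_mult_top)

lemma mult_top_mult_le_top_mult: "x * top * y \<le> top * y"
  by (rule mult_left_isotone) simp

lemma mult_le_mult_top_mult: "x * y * z \<le> x * top * z"
  by (simp add: mult_left_isotone mult_right_isotone)

lemma conv_isotone: "x \<le> y \<Longrightarrow> conv x \<le> conv y"
  by (metis conv_sup le_iff_sup)

lemma conv_order: "conv x \<le> conv y \<longleftrightarrow> x \<le> y"
  by (metis conv_isotone conv_involutive)

lemma conv_bot: "conv bot = bot"
  by (metis bot.extremum bot.extremum_uniqueI conv_involutive conv_isotone)

lemma conv_eq_bot_iff: "conv x = bot \<longleftrightarrow> x = bot"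
  by (metis conv_bot conv_involutive)

lemma conv_top: "conv top = top"
  by (metis conv_involutive conv_isotone top.extremum top.extremum_uniqueI)

lemma conv_one: "conv 1 = 1"
  by (metis conv_involutive conv_mult mult_1_left)

lemma conv_inf: "conv (inf x y) = inf (conv x) (conv y)"
proof (rule order.antisym)
  show "conv (inf x y) \<le> inf (conv x) (conv y)"
    by (simp add: conv_isotone)
  have "conv (inf (conv x) (conv y)) \<le> inf x y"
    by (metis conv_involutive conv_isotone inf.cobounded1 inf.cobounded2 le_inf_iff)
  then show "inf (conv x) (conv y) \<le> conv (inf x y)"
    by (metis conv_involutive conv_isotone)
qed

lemma dedekind_2: "inf (x * y) z \<le> inf x (z * conv y) * y"
proof -
  have "conv (inf (x * y) z) \<le> conv y * inf (conv x) (y * conv z)"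
    using dedekind_1[of "conv y" "conv x" "conv z"]
    by (simp add: conv_inf conv_mult conv_involutive)
  also have "\<dots> = conv (inf x (z * conv y) * y)"
    by (simp add: conv_inf conv_mult conv_involutive)
  finally show ?thesis
    using conv_order by blast
qed

lemma le_mult_conv_mult: "x \<le> x * conv x * x"
  using dedekind_1[of x 1 x] mult_right_isotone[of "inf 1 (conv x * x)" "conv x * x" x]
  by (simp add: mult.assoc)

lemma pp_increasing: "x \<le> - (- x)"
  using pseudo_complement[of x "- x"] pseudo_complement[of "- x" x] by (simp add: inf.commute)

lemma pp_isotone: "x \<le> y \<Longrightarrow> - (- x) \<le> - (- y)"
  by (metis inf.absorb_iff2 inf.commute inf.left_commute pp_increasing pseudo_complement)

lemma pp_top: "- (- top) = top"
  by (simp add: pp_increasing top.extremum_uniqueI)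

lemma inf_p: "inf x (- x) = bot"
  using pp_increasing pseudo_complement by blast

lemma pp_mult_top_mult: "- (- (x * top * y)) = - (- x) * top * - (- y)"
  by (simp add: pp_mult pp_top)

lemma conv_le_one_iff: "conv p \<le> 1 \<longleftrightarrow> p \<le> 1"
  by (metis conv_one conv_order)

lemma conv_coreflexive: "p \<le> 1 \<Longrightarrow> conv p = p"
proof -
  have le: "conv q \<le> q" if "q \<le> 1" for q
  proof -
    have "conv q = inf (conv q * 1) 1"
      using that by (simp add: conv_le_one_iff inf.absorb1)
    also have "\<dots> \<le> conv q * q"
      using dedekind_1[of "conv q" 1 1] mult_right_isotone[of "inf 1 q" q "conv q"]
      by (simp add: conv_involutive order_trans)
    also have "\<dots> \<le> q"
      using mult_left_isotone[of "conv q" 1 q] that by (simp add: conv_le_one_iff)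
    finally show ?thesis .
  qed
  assume "p \<le> 1"
  then show ?thesis
    using le[of p] le[of "conv p"] by (simp add: conv_involutive conv_le_one_iff order.antisym)
qed

lemma coreflexive_mult_eq_if_le_mult_top:
  assumes "p \<le> 1" and "y \<le> p * top"
  shows "p * y = y"
proof (rule order.antisym)
  show "p * y \<le> y"
    using mult_left_isotone[OF assms(1)] by simp
  have "y = inf (p * top) y"
    using assms(2) by (simp add: inf.absorb2)
  also have "\<dots> \<le> p * (conv p * y)"
    using dedekind_1[of p top y] mult_right_isotone[of "inf top (conv p * y)" "conv p * y" p]
    by simp
  also have "\<dots> \<le> p * y"
    using mult_right_isotone[of "p * y" y p] mult_left_isotone[OF assms(1), of y]
    by (simp add: conv_coreflexive[OF assms(1)])
  finally show "y \<le> p * y" .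
qed

lemma mult_coreflexive_eq_if_le_top_mult:
  assumes "q \<le> 1" and "y \<le> top * q"
  shows "y * q = y"
proof -
  have "conv y \<le> q * top"
    using assms conv_order[of y "top * q"] by (simp add: conv_mult conv_top conv_coreflexive)
  then have "conv (q * conv y) = y"
    using coreflexive_mult_eq_if_le_mult_top[OF assms(1)] by (simp add: conv_involutive)
  then show ?thesis
    using assms(1) by (simp add: conv_mult conv_involutive conv_coreflexive)
qed

definition domain :: "'a \<Rightarrow> 'a" where
  "domain x = inf 1 (x * top)"

definition codomain :: "'a \<Rightarrow> 'a" where
  "codomain x = inf 1 (top * x)"

lemma domain_le_one: "domain x \<le> 1"
  by (simp add: domain_def)

lemma codomain_le_one: "codomain x \<le> 1"
  by (simp add: codomain_def)

lemma codomain_conv_domain: "codomain x = conv (domain (conv x))"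
  by (simp add: codomain_def domain_def conv_inf conv_mult conv_one conv_top conv_involutive)

lemma domain_coreflexive:
  assumes "p \<le> 1"
  shows "domain p = p"
proof (rule order.antisym)
  have "domain p = p * domain p"
    using coreflexive_mult_eq_if_le_mult_top[OF assms, of "domain p"] by (simp add: domain_def)
  also have "\<dots> \<le> p"
    using mult_right_isotone[OF domain_le_one, of p] by simp
  finally show "domain p \<le> p" .
  show "p \<le> domain p"
    using assms mult_top_increasing by (simp add: domain_def)
qed

lemma codomain_coreflexive: "q \<le> 1 \<Longrightarrow> codomain q = q"
  by (simp add: codomain_conv_domain conv_coreflexive domain_coreflexive)

lemma domain_mult_top: "domain x * top = x * top"
proof (rule order.antisym)
  show "domain x * top \<le> x * top"
    using mult_left_isotone[of "domain x" "x * top" top]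
    by (simp add: domain_def mult.assoc top_mult_top)
  have "x \<le> inf 1 (x * conv x) * x"
    using dedekind_2[of 1 x x] by simp
  also have "\<dots> \<le> domain x * x"
    unfolding domain_def
    by (meson inf.mono order_refl mult_left_isotone mult_right_isotone top_greatest)
  finally have "x * top \<le> domain x * (x * top)"
    using mult_left_isotone[of x "domain x * x" top] by (simp add: mult.assoc)
  also have "\<dots> \<le> domain x * top"
    by (simp add: mult_right_isotone)
  finally show "x * top \<le> domain x * top" .
qed

lemma top_mult_codomain: "top * codomain x = top * x"
proof -
  have "top * codomain x = conv (domain (conv x) * top)"
    by (simp add: codomain_conv_domain conv_mult conv_top)
  also have "\<dots> = top * x"
    by (simp add: domain_mult_top conv_mult conv_top conv_involutive)
  finally show ?thesis .
qed

lemma domain_eq_bot_iff: "domain x = bot \<longleftrightarrow> x = bot"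
proof
  assume "domain x = bot"
  then have "x * top = bot"
    using domain_mult_top[of x] by (simp add: mult_bot_left)
  then show "x = bot"
    using mult_top_increasing[of x] by (simp add: bot_unique)
qed (simp add: domain_def mult_bot_left)

lemma codomain_eq_bot_iff: "codomain x = bot \<longleftrightarrow> x = bot"
  by (simp add: codomain_conv_domain conv_eq_bot_iff domain_eq_bot_iff)

lemma atom_nonbot: "atom a \<Longrightarrow> a \<noteq> bot"
  by (simp add: atom_def)

lemma atom_eqI: "atom a \<Longrightarrow> y \<noteq> bot \<Longrightarrow> y \<le> a \<Longrightarrow> y = a"
  by (simp add: atom_def)

lemma atom_conv:
  assumes "atom a"
  shows "atom (conv a)"
  unfolding atom_def
proof (intro conjI allI impI)
  show "conv a \<noteq> bot"
    using assms by (simp add: atom_nonbot conv_eq_bot_iff)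
  fix y
  assume "y \<noteq> bot \<and> y \<le> conv a"
  moreover have "conv y \<le> a"
    using conv_order[of y "conv a"] \<open>y \<noteq> bot \<and> y \<le> conv a\<close> by (simp add: conv_involutive)
  ultimately have "conv y = a"
    using assms atom_eqI conv_eq_bot_iff by blast
  then show "y = conv a"
    using conv_involutive[of y] by simp
qed

lemma atom_domain:
  assumes "atom a"
  shows "atom (domain a)"
proof -
  have "r = domain a" if "r \<noteq> bot" and "r \<le> domain a" for r
  proof -
    have r: "r \<le> 1" "r \<le> a * top"
      using that(2) by (simp_all add: domain_def)
    have "r \<le> inf a (r * top) * top"
      using dedekind_2[of a top r] r(2) by (simp add: conv_top inf.absorb2)
    then have "inf a (r * top) = a"
      using assms that(1) by (metis atom_eqI bot_unique inf.cobounded1 mult_bot_left)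
    then have "a * top \<le> r * top"
      by (metis inf.orderI mult.assoc mult_left_isotone top_mult_top)
    then have "domain a \<le> domain r"
      by (simp add: domain_def le_infI2)
    then show ?thesis
      using r(1) that(2) by (simp add: domain_coreflexive order.antisym)
  qed
  then show ?thesis
    using assms by (simp add: atom_def domain_eq_bot_iff)
qed

lemma atom_codomain: "atom a \<Longrightarrow> atom (codomain a)"
  by (simp add: codomain_conv_domain atom_conv atom_domain)

lemma inf_mult_top_top_mult_le: "inf (x * top) (top * y) \<le> x * top * y"
proof -
  have "inf (x * top) (top * y) \<le> x * inf top (conv x * (top * y))"
    by (rule dedekind_1)
  also have "\<dots> \<le> x * (conv x * (top * y))"
    by (simp add: mult_right_isotone)
  also have "\<dots> \<le> x * top * y"
    using mult_le_mult_top_mult[of x "conv x * top" y] by (simp add: mult.assoc)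
  finally show ?thesis .
qed

lemma rectangle_eq_inf:
  assumes "rectangle a"
  shows "inf (a * top) (top * a) = a"
proof (rule order.antisym)
  show "inf (a * top) (top * a) \<le> a"
    using inf_mult_top_top_mult_le[of a a] assms by (simp add: rectangle_def)
qed (simp add: mult_top_increasing top_mult_increasing)

lemma rectangle_eq_domain_top_codomain:
  assumes "rectangle a"
  shows "domain a * top * codomain a = a"
proof (rule order.antisym)
  have "domain a * top * codomain a \<le> inf (domain a * top) (top * codomain a)"
    by (simp add: mult_top_mult_le_mult_top mult_top_mult_le_top_mult)
  then show "domain a * top * codomain a \<le> a"
    using assms by (simp add: domain_mult_top top_mult_codomain rectangle_eq_inf)
  show "a \<le> domain a * top * codomain a"
    using inf_mult_top_top_mult_le[of "domain a" "codomain a"] assms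
    by (simp add: domain_mult_top top_mult_codomain rectangle_eq_inf)
qed

lemma rectangle_eqI:
  assumes "rectangle a" "rectangle b" "domain a = domain b" "codomain a = codomain b"
  shows "a = b"
proof -
  have "a = domain a * top * codomain a"
    using rectangle_eq_domain_top_codomain[OF assms(1)] by simp
  also have "\<dots> = domain b * top * codomain b"
    using assms(3,4) by simp
  also have "\<dots> = b"
    using rectangle_eq_domain_top_codomain[OF assms(2)] .
  finally show ?thesis .
qed

lemma mult_top_mult_nonbot:
  assumes "simple p" "simple q" "p \<noteq> bot"
  shows "p * top * q \<noteq> bot"
proof
  assume "p * top * q = bot"
  have "top = top * p * top * q * top"
    using assms(1,2) by (simp add: simple_def)
  also have "\<dots> = top * (p * top * q) * top"
    by (simp add: mult.assoc)
  finally have "top = bot"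
    using \<open>p * top * q = bot\<close> by (simp add: mult_bot_left mult_bot_right)
  then show False
    using assms(3) top_greatest[of p] by (simp add: bot_unique)
qed

lemma domain_mult_top_mult:
  assumes "p \<le> 1" "simple q"
  shows "domain (p * top * q) = p"
proof -
  have "p * top * q * top = p * top"
    using assms(2) by (simp add: simple_def mult.assoc)
  then show ?thesis
    using domain_coreflexive[OF assms(1)] by (simp add: domain_def)
qed

lemma codomain_mult_top_mult:
  assumes "q \<le> 1" "simple p"
  shows "codomain (p * top * q) = q"
proof -
  have "top * (p * top * q) = top * q"
    using assms(2) by (simp add: simple_def flip: mult.assoc)
  then show ?thesis
    using codomain_coreflexive[OF assms(1)] by (simp add: codomain_def)
qed

lemma domain_codomain_if_le_mult_top_mult:
  assumes "a \<noteq> bot" "a \<le> p * top * q"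
    and "atom p" "p \<le> 1" "atom q" "q \<le> 1"
  shows "domain a = p" "codomain a = q"
proof -
  have "a * top \<le> p * top"
    using mult_left_isotone[OF assms(2), of top] mult_top_mult_le_mult_top[of p "q * top"]
    by (simp add: mult.assoc)
  then have "domain a \<le> domain p"
    by (simp add: domain_def le_infI2)
  then show "domain a = p"
    using assms by (simp add: atom_eqI domain_eq_bot_iff domain_coreflexive)
  have "top * a \<le> top * q"
    using mult_right_isotone[OF assms(2), of top] mult_top_mult_le_top_mult[of "top * p" q]
    by (simp add: mult.assoc)
  then have "codomain a \<le> codomain q"
    by (simp add: codomain_def le_infI2)
  then show "codomain a = q"
    using assms by (simp add: atom_eqI codomain_eq_bot_iff codomain_coreflexive)
qed

lemma mult_conv_nonbot:
  assumes "y \<noteq> bot"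
  shows "y * conv y \<noteq> bot"
proof
  assume "y * conv y = bot"
  then have "y \<le> bot"
    using le_mult_conv_mult[of y] by (simp add: mult_bot_left)
  then show False
    using assms by (simp add: bot_unique)
qed

lemma mult_conv_le_if_le_mult_top_mult:
  assumes "p \<le> 1" "q \<le> 1" "y \<le> p * top * q"
  shows "y * conv y \<le> p * top * p" and "conv y * (p * top * q) \<le> q * top * q"
proof -
  have conv_b: "conv (p * top * q) = q * top * p"
    using assms(1,2) by (simp add: conv_mult conv_top conv_coreflexive mult.assoc)
  have "y * conv y \<le> p * top * q * (q * top * p)"
    using mult_isotone[OF assms(3) conv_isotone[OF assms(3)]] conv_b by simp
  also have "\<dots> \<le> p * top * p"
    using mult_le_mult_top_mult[of p "top * q * (q * top)" p] by (simp add: mult.assoc)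
  finally show "y * conv y \<le> p * top * p" .
  have "conv y * (p * top * q) \<le> q * top * p * (p * top * q)"
    using mult_left_isotone[OF conv_isotone[OF assms(3)]] conv_b by simp
  also have "\<dots> \<le> q * top * q"
    using mult_le_mult_top_mult[of q "top * p * (p * top)" q] by (simp add: mult.assoc)
  finally show "conv y * (p * top * q) \<le> q * top * q" .
qed

lemma atom_mult_top_mult:
  assumes p: "atom p" "p \<le> 1" "rectangle p" "simple p"
    and q: "atom q" "q \<le> 1" "rectangle q" "simple q"
  shows "atom (p * top * q)"
proof -
  let ?b = "p * top * q"
  have b_nonbot: "?b \<noteq> bot"
    using p q by (simp add: mult_top_mult_nonbot atom_nonbot)
  have "?b \<le> y" if y: "y \<noteq> bot" "y \<le> ?b" for y
  proof -
    have "y * conv y \<le> p"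
      using mult_conv_le_if_le_mult_top_mult(1)[OF p(2) q(2) y(2)] p(3)
      unfolding rectangle_def by (rule order_trans)
    then have yy: "y * conv y = p"
      by (rule atom_eqI[OF p(1) mult_conv_nonbot[OF y(1)]])
    have "p * ?b = ?b"
      using coreflexive_mult_eq_if_le_mult_top[OF p(2) mult_top_mult_le_mult_top] .
    then have yb: "y * (conv y * ?b) = ?b"
      by (simp only: mult.assoc[symmetric] yy)
    have "conv y * ?b \<noteq> bot"
    proof
      assume "conv y * ?b = bot"
      then have "?b = y * bot"
        using yb by simp
      with b_nonbot show False
        by (simp add: mult_bot_right)
    qed
    moreover have "conv y * ?b \<le> q"
      using mult_conv_le_if_le_mult_top_mult(2)[OF p(2) q(2) y(2)] q(3)
      unfolding rectangle_def by (rule order_trans)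
    ultimately have "conv y * ?b = q"
      by (rule atom_eqI[OF q(1)])
    moreover have "y \<le> top * q"
      using y(2) mult_top_mult_le_top_mult[of p q] by (rule order_trans)
    then have "y * q = y"
      by (rule mult_coreflexive_eq_if_le_top_mult[OF q(2)])
    ultimately show ?thesis
      using yb by simp
  qed
  then show ?thesis
    unfolding atom_def using b_nonbot order.antisym by blast
qed

lemma regular_coreflexive:
  assumes "p \<le> 1" "rectangle p" "simple p"
  shows "- (- p) = p"
proof -
  let ?x = "- (- p)"
  have x_one: "?x \<le> 1"
    using pp_isotone[OF assms(1)] pp_one by simp
  have "?x * top * p \<le> - (- (p * top * p))" and "p * top * ?x \<le> - (- (p * top * p))"
    unfolding pp_mult_top_mult by (simp_all add: mult_isotone pp_increasing)
  then have "?x * top * p \<le> 1" and "p * top * ?x \<le> 1"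
    using pp_isotone[of "p * top * p" p] assms(2) x_one by (auto simp: rectangle_def)
  then have "?x * top * p \<le> codomain p" and "p * top * ?x \<le> domain p"
    by (simp_all add: codomain_def domain_def mult_top_mult_le_top_mult mult_top_mult_le_mult_top)
  then have xp: "?x * top * p \<le> p" and px: "p * top * ?x \<le> p"
    using assms(1) by (simp_all add: codomain_coreflexive domain_coreflexive)
  have "?x \<le> ?x * top * ?x"
    using le_mult_conv_mult mult_le_mult_top_mult by (rule order_trans)
  also have "\<dots> = ?x * top * p * top * ?x"
    using assms(3) by (simp add: simple_def mult.assoc)
  also have "\<dots> \<le> p * top * ?x"
    using mult_left_isotone[OF xp, of "top * ?x"] by (simp add: mult.assoc)
  also have "\<dots> \<le> p"
    using px .
  finally show ?thesis
    using pp_increasing order.antisym by blast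
qed

lemma atom_count_neq_infinity: "finite {a. atom a} \<Longrightarrow> atom_count x \<noteq> \<infinity>"
  by (simp add: atom_count_def finite_subset)

end

lemma atom_regular:
  fixes a :: "'a::stone_relation_algebra"
  assumes "atom_rectangular TYPE('a)" "atom_simple TYPE('a)" "atom a"
  shows "- (- a) = a"
proof -
  have rect: "rectangle a"
    using assms by (simp add: atom_rectangular_def)
  have "rectangle (domain a)" "simple (domain a)" "rectangle (codomain a)" "simple (codomain a)"
    using assms(1,2) atom_domain[OF assms(3)] atom_codomain[OF assms(3)]
    unfolding atom_rectangular_def atom_simple_def by blast+
  then have "- (- domain a) = domain a" "- (- codomain a) = codomain a"
    by (simp_all add: regular_coreflexive domain_le_one codomain_le_one)
  then have "- (- (domain a * top * codomain a)) = domain a * top * codomain a"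
    by (simp only: pp_mult_top_mult)
  then show ?thesis
    by (simp only: rectangle_eq_domain_top_codomain[OF rect])
qed

lemma le_pp_if_unique_atom_below:
  fixes x a :: "'a::stone_relation_algebra"
  assumes "atomic_alg TYPE('a)" and "{b. atom b \<and> b \<le> x} = {a}"
  shows "x \<le> - (- a)"
proof -
  have "inf x (- a) = bot"
  proof (rule ccontr)
    assume "inf x (- a) \<noteq> bot"
    then obtain b where b: "atom b" "b \<le> inf x (- a)"
      using assms(1) unfolding atomic_alg_def by blast
    then have "b \<in> {b. atom b \<and> b \<le> x}"
      by simp
    then have "b = a"
      using assms(2) by simp
    then have "a = bot"
      using b(2) inf_p[of a] by (simp add: inf.absorb1)
    then show False
      using atom_nonbot[OF b(1)] \<open>b = a\<close> by simp
  qed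
  then show ?thesis
    using pseudo_complement[of x "- a"] by simp
qed

lemma atom_iff_atom_count_eq_1:
  fixes x :: "'a::stone_relation_algebra"
  assumes "atomic_alg TYPE('a)" and "\<And>a::'a. atom a \<Longrightarrow> - (- a) = a"
  shows "atom x \<longleftrightarrow> atom_count x = 1"
proof
  assume "atom x"
  then have "b = x" if "atom b" "b \<le> x" for b
    using atom_eqI atom_nonbot that by blast
  then have "{b. atom b \<and> b \<le> x} = {x}"
    using \<open>atom x\<close> by auto
  then show "atom_count x = 1"
    by (simp add: atom_count_eq_ecard ecard_eq_1_iff)
next
  assume "atom_count x = 1"
  then obtain a where unique: "{b. atom b \<and> b \<le> x} = {a}"
    by (auto simp: atom_count_eq_ecard ecard_eq_1_iff)
  then have "atom a" "a \<le> x"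
    by auto
  moreover have "x \<le> a"
    using le_pp_if_unique_atom_below[OF assms(1) unique] assms(2)[OF \<open>atom a\<close>] by simp
  ultimately show "atom x"
    using order.antisym by blast
qed

lemma atom_count_top_le:
  assumes "atom_rectangular TYPE('a::stone_relation_algebra)"
  shows "atom_count (top::'a) \<le> (atom_count (1::'a))\<^sup>2"
proof -
  let ?D = "{p::'a. atom p \<and> p \<le> 1}"
  have "inj_on (\<lambda>a. (domain a, codomain a)) {a::'a. atom a \<and> a \<le> top}"
  proof (rule inj_onI)
    fix a b :: 'a
    assume "a \<in> {a. atom a \<and> a \<le> top}" "b \<in> {a. atom a \<and> a \<le> top}"
      and "(domain a, codomain a) = (domain b, codomain b)"
    then show "a = b"
      using assms rectangle_eqI[of a b] by (simp add: atom_rectangular_def)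
  qed
  moreover have "(\<lambda>a. (domain a, codomain a)) ` {a. atom a \<and> a \<le> top} \<subseteq> ?D \<times> ?D"
    by (auto simp: atom_domain atom_codomain domain_le_one codomain_le_one)
  ultimately show ?thesis
    by (simp add: atom_count_eq_ecard power2_eq_square ecard_le_if_inj_on flip: ecard_Times)
qed

lemma atom_count_one_squared_le:
  assumes "\<And>p q::'a::stone_relation_algebra. atom p \<Longrightarrow> p \<le> 1 \<Longrightarrow> atom q \<Longrightarrow> q \<le> 1
             \<Longrightarrow> \<exists>a. atom a \<and> domain a = p \<and> codomain a = q"
  shows "(atom_count (1::'a))\<^sup>2 \<le> atom_count (top::'a)"
proof -
  let ?D = "{p::'a. atom p \<and> p \<le> 1}"
  have "?D \<times> ?D \<subseteq> (\<lambda>a. (domain a, codomain a)) ` {a. atom a \<and> a \<le> top}"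
  proof clarify
    fix p q :: 'a
    assume "atom p" "p \<le> 1" "atom q" "q \<le> 1"
    then obtain a where "atom a" "domain a = p" "codomain a = q"
      using assms by blast
    then show "(p, q) \<in> (\<lambda>a. (domain a, codomain a)) ` {a. atom a \<and> a \<le> top}"
      by (auto intro: image_eqI[where x = a])
  qed
  then show ?thesis
    by (simp add: atom_count_eq_ecard power2_eq_square ecard_le_if_subset_image flip: ecard_Times)
qed

lemma exists_atom_domain_codomain_if_atomic:
  fixes p q :: "'a::stone_relation_algebra"
  assumes "atomic_alg TYPE('a)" "atom_simple TYPE('a)"
    and "atom p" "p \<le> 1" "atom q" "q \<le> 1"
  shows "\<exists>a. atom a \<and> domain a = p \<and> codomain a = q"
proof -
  have "p * top * q \<noteq> bot"
    using assms by (simp add: atom_simple_def mult_top_mult_nonbot atom_nonbot)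
  then obtain a where a: "atom a" "a \<le> p * top * q"
    using assms(1) unfolding atomic_alg_def by blast
  then have "domain a = p" "codomain a = q"
    using domain_codomain_if_le_mult_top_mult[OF atom_nonbot[OF a(1)] a(2) assms(3-6)] by simp_all
  then show ?thesis
    using a(1) by blast
qed

lemma exists_atom_domain_codomain_if_rectangular:
  fixes p q :: "'a::stone_relation_algebra"
  assumes "atom_rectangular TYPE('a)" "atom_simple TYPE('a)"
    and "atom p" "p \<le> 1" "atom q" "q \<le> 1"
  shows "\<exists>a. atom a \<and> domain a = p \<and> codomain a = q"
proof -
  have "rectangle p" "simple p" "rectangle q" "simple q"
    using assms by (simp_all add: atom_rectangular_def atom_simple_def)
  then show ?thesis
    using assms(3-6) atom_mult_top_mult domain_mult_top_mult codomain_mult_top_mult by blast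
qed

theorem mainTheorem5:
  shows "(atomic_alg TYPE('a::stone_relation_algebra) \<and> atom_rectangular TYPE('a) \<and> simple_alg TYPE('a)
            \<longrightarrow> (\<forall>x::'a. atom x \<longleftrightarrow> atom_count x = 1))
       \<and> (atomic_alg TYPE('a) \<and> relation_algebra TYPE('a)
            \<longrightarrow> (\<forall>x::'a. atom x \<longleftrightarrow> atom_count x = 1))
       \<and> (atom_rectangular TYPE('a) \<longrightarrow> atom_count (top::'a) \<le> (atom_count (1::'a))\<^sup>2)
       \<and> (atomic_alg TYPE('a) \<and> simple_alg TYPE('a) \<and> finitely_many_atoms TYPE('a)
            \<longrightarrow> atom_count (top::'a) \<ge> (atom_count (1::'a))\<^sup>2)
       \<and> (atom_rectangular TYPE('a) \<and> atom_simple TYPE('a)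
            \<longrightarrow> atom_count (top::'a) = (atom_count (1::'a))\<^sup>2)
       \<and> (finitely_many_atoms TYPE('a) \<longrightarrow> atom_count (top::'a) \<noteq> \<infinity>)"
proof -
  have atom_simple_if_simple: "atom_simple TYPE('a)" if "simple_alg TYPE('a)"
    using that by (simp add: atom_simple_def simple_alg_def atom_nonbot)
  show ?thesis
  proof (intro conjI impI allI; (elim conjE)?)
    show "atom x \<longleftrightarrow> atom_count x = 1"
      if "atomic_alg TYPE('a)" "atom_rectangular TYPE('a)" "simple_alg TYPE('a)" for x :: 'a
      using that atom_iff_atom_count_eq_1 atom_regular atom_simple_if_simple by blast
    show "atom x \<longleftrightarrow> atom_count x = 1"
      if "atomic_alg TYPE('a)" "relation_algebra TYPE('a)" for x :: 'a
      using that by (simp add: atom_iff_atom_count_eq_1 relation_algebra_def)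
    show "atom_count (top::'a) \<le> (atom_count (1::'a))\<^sup>2" if "atom_rectangular TYPE('a)"
      using that by (rule atom_count_top_le)
    show "(atom_count (1::'a))\<^sup>2 \<le> atom_count (top::'a)"
      if "atomic_alg TYPE('a)" "simple_alg TYPE('a)"
      using that atom_count_one_squared_le exists_atom_domain_codomain_if_atomic
        atom_simple_if_simple by blast
    show "atom_count (top::'a) = (atom_count (1::'a))\<^sup>2"
      if "atom_rectangular TYPE('a)" "atom_simple TYPE('a)"
      using that atom_count_top_le atom_count_one_squared_le
        exists_atom_domain_codomain_if_rectangular by (blast intro: order.antisym)
    show "atom_count (top::'a) \<noteq> \<infinity>" if "finitely_many_atoms TYPE('a)"
      using that by (simp add: finitely_many_atoms_def atom_count_neq_infinity)
  qed
qed

end
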